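(* Let $S$ be a distributive $\{\vee,0\}$-semilattice. Then the set of all elements $\varepsilon\in S$ such that $S$ satisfies $\mathrm{URP}_1$ at $\varepsilon$ is closed under the join operation.
   Context: A join-semilattice $S$ is distributive if whenever $c\leq a\vee b$ in $S$ there exist $a'\leq a$, $b'\leq b$ with $c=a'\vee b'$. Let $S$ be a $\{\vee,0\}$-semilattice and $\varepsilon\in S$. $S$ satisfies $\mathrm{URP}_1$ at $\varepsilon$ if for every family $((\alpha_i,\beta_i))_{i\in I}$ of elements of $S\times S$ with $\alpha_i\vee\beta_i=\varepsilon$ for all $i$, there exist a family $((\alpha_i^*,\beta_i^* ))_{i\in I}$ in $S\times S$ and a family $(\gamma_{i,j})_{(i,j)\in I\times I}$ in $S$ such that for all $i,j,k\in I$: (i) $\alpha_i^*\leq\alpha_i$, $\beta_i^*\leq\beta_i$, $\alpha_i^*\vee\beta_i^*=\varepsilon$; (ii) $\gamma_{i,j}\leq\alpha_i^*$ and $\gamma_{i,j}\leq\beta_j^*$; (iii) $\alpha_i^*\leq\alpha_j^*\vee\gamma_{i,j}$ and $\beta_j^*\leq\beta_i^*\vee\gamma_{i,j}$; (iv) $\gamma_{i,k}\leq\gamma_{i,j}\vee\gamma_{j,k}$. *)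

theory Defs
  imports Main
begin

definition distributive_sl :: "'a::bounded_semilattice_sup_bot itself \<Rightarrow> bool" where
  "distributive_sl _ \<longleftrightarrow>
     (\<forall>a b c :: 'a. c \<le> sup a b \<longrightarrow> (\<exists>a' b'. a' \<le> a \<and> b' \<le> b \<and> c = sup a' b'))"

definition URP1_at :: "'i itself \<Rightarrow> 'a::bounded_semilattice_sup_bot \<Rightarrow> bool" where
  "URP1_at _ eps \<longleftrightarrow>
     (\<forall>(I :: 'i set) (\<alpha> :: 'i \<Rightarrow> 'a) (\<beta> :: 'i \<Rightarrow> 'a).
        (\<forall>i\<in>I. sup (\<alpha> i) (\<beta> i) = eps) \<longrightarrow>
        (\<exists>(\<alpha>s :: 'i \<Rightarrow> 'a) (\<beta>s :: 'i \<Rightarrow> 'a) (\<gamma> :: 'i \<Rightarrow> 'i \<Rightarrow> 'a).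
           (\<forall>i\<in>I. \<alpha>s i \<le> \<alpha> i \<and> \<beta>s i \<le> \<beta> i \<and> sup (\<alpha>s i) (\<beta>s i) = eps) \<and>
           (\<forall>i\<in>I. \<forall>j\<in>I. \<gamma> i j \<le> \<alpha>s i \<and> \<gamma> i j \<le> \<beta>s j) \<and>
           (\<forall>i\<in>I. \<forall>j\<in>I. \<alpha>s i \<le> sup (\<alpha>s j) (\<gamma> i j) \<and> \<beta>s j \<le> sup (\<beta>s i) (\<gamma> i j)) \<and>
           (\<forall>i\<in>I. \<forall>j\<in>I. \<forall>k\<in>I. \<gamma> i k \<le> sup (\<gamma> i j) (\<gamma> j k))))"

end

theory Submission
  imports Defs
begin

text \<open>
  Given \<alpha> i \<squnion> \<beta> i = a \<squnion> b, distributivity splits each pair into a pair below it with join a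
  and one with join b. URP_1 at a and at b supplies solutions for the two refined families,
  and the pointwise joins of these two solutions solve the original family at a \<squnion> b:
  all conditions of URP_1 are inequalities between joins, and these survive pointwise joins.
\<close>

definition URP1_solution ::
    "'i set \<Rightarrow> ('i \<Rightarrow> 'a::semilattice_sup) \<Rightarrow> ('i \<Rightarrow> 'a) \<Rightarrow> 'a
      \<Rightarrow> ('i \<Rightarrow> 'a) \<Rightarrow> ('i \<Rightarrow> 'a) \<Rightarrow> ('i \<Rightarrow> 'i \<Rightarrow> 'a) \<Rightarrow> bool" where
  "URP1_solution I \<alpha> \<beta> eps \<alpha>s \<beta>s \<gamma> \<longleftrightarrow>
     (\<forall>i\<in>I. \<alpha>s i \<le> \<alpha> i \<and> \<beta>s i \<le> \<beta> i \<and> sup (\<alpha>s i) (\<beta>s i) = eps) \<and>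
     (\<forall>i\<in>I. \<forall>j\<in>I. \<gamma> i j \<le> \<alpha>s i \<and> \<gamma> i j \<le> \<beta>s j) \<and>
     (\<forall>i\<in>I. \<forall>j\<in>I. \<alpha>s i \<le> sup (\<alpha>s j) (\<gamma> i j) \<and> \<beta>s j \<le> sup (\<beta>s i) (\<gamma> i j)) \<and>
     (\<forall>i\<in>I. \<forall>j\<in>I. \<forall>k\<in>I. \<gamma> i k \<le> sup (\<gamma> i j) (\<gamma> j k))"

lemma URP1_at_iff_solvable:
  "URP1_at TYPE('i) eps \<longleftrightarrow>
     (\<forall>(I :: 'i set) \<alpha> \<beta>. (\<forall>i\<in>I. sup (\<alpha> i) (\<beta> i) = eps) \<longrightarrow>
        (\<exists>\<alpha>s \<beta>s \<gamma>. URP1_solution I \<alpha> \<beta> eps \<alpha>s \<beta>s \<gamma>))"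
  unfolding URP1_at_def URP1_solution_def ..

lemma URP1_solution_mono:
  assumes "URP1_solution I \<alpha> \<beta> eps \<alpha>s \<beta>s \<gamma>"
    and "\<forall>i\<in>I. \<alpha> i \<le> \<alpha>' i \<and> \<beta> i \<le> \<beta>' i"
  shows "URP1_solution I \<alpha>' \<beta>' eps \<alpha>s \<beta>s \<gamma>"
  using assms unfolding URP1_solution_def by (meson order_trans)

lemma sup_le_sup_sup_interchange:
  fixes x y p q r s :: "'a::semilattice_sup"
  assumes "x \<le> sup p q" and "y \<le> sup r s"
  shows "sup x y \<le> sup (sup p r) (sup q s)"
proof -
  have "sup x y \<le> sup (sup p q) (sup r s)"
    using assms by (rule sup_mono)
  also have "\<dots> = sup (sup p r) (sup q s)"
    by (simp add: ac_simps)
  finally show ?thesis .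
qed

lemma URP1_solution_sup:
  fixes a b :: "'a::semilattice_sup"
  assumes "URP1_solution I \<alpha>\<^sub>1 \<beta>\<^sub>1 a \<alpha>s\<^sub>1 \<beta>s\<^sub>1 \<gamma>\<^sub>1"
    and "URP1_solution I \<alpha>\<^sub>2 \<beta>\<^sub>2 b \<alpha>s\<^sub>2 \<beta>s\<^sub>2 \<gamma>\<^sub>2"
  shows "URP1_solution I (\<lambda>i. sup (\<alpha>\<^sub>1 i) (\<alpha>\<^sub>2 i)) (\<lambda>i. sup (\<beta>\<^sub>1 i) (\<beta>\<^sub>2 i)) (sup a b)
           (\<lambda>i. sup (\<alpha>s\<^sub>1 i) (\<alpha>s\<^sub>2 i)) (\<lambda>i. sup (\<beta>s\<^sub>1 i) (\<beta>s\<^sub>2 i))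
           (\<lambda>i j. sup (\<gamma>\<^sub>1 i j) (\<gamma>\<^sub>2 i j))"
  unfolding URP1_solution_def
proof (intro conjI ballI)
  note sol\<^sub>1 = assms(1)[unfolded URP1_solution_def]
    and sol\<^sub>2 = assms(2)[unfolded URP1_solution_def]
  fix i j k assume "i \<in> I" "j \<in> I" "k \<in> I"
  with sol\<^sub>1 sol\<^sub>2 show "sup (\<alpha>s\<^sub>1 i) (\<alpha>s\<^sub>2 i) \<le> sup (\<alpha>\<^sub>1 i) (\<alpha>\<^sub>2 i)"
    and "sup (\<beta>s\<^sub>1 i) (\<beta>s\<^sub>2 i) \<le> sup (\<beta>\<^sub>1 i) (\<beta>\<^sub>2 i)"
    and "sup (\<gamma>\<^sub>1 i j) (\<gamma>\<^sub>2 i j) \<le> sup (\<alpha>s\<^sub>1 i) (\<alpha>s\<^sub>2 i)"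
    and "sup (\<gamma>\<^sub>1 i j) (\<gamma>\<^sub>2 i j) \<le> sup (\<beta>s\<^sub>1 j) (\<beta>s\<^sub>2 j)"
    by (blast intro: sup_mono)+
  from \<open>i \<in> I\<close> sol\<^sub>1 sol\<^sub>2
  show "sup (sup (\<alpha>s\<^sub>1 i) (\<alpha>s\<^sub>2 i)) (sup (\<beta>s\<^sub>1 i) (\<beta>s\<^sub>2 i)) = sup a b"
    by (metis sup_assoc sup_left_commute)
  from \<open>i \<in> I\<close> \<open>j \<in> I\<close> \<open>k \<in> I\<close> sol\<^sub>1 sol\<^sub>2
  show "sup (\<alpha>s\<^sub>1 i) (\<alpha>s\<^sub>2 i) \<le> sup (sup (\<alpha>s\<^sub>1 j) (\<alpha>s\<^sub>2 j)) (sup (\<gamma>\<^sub>1 i j) (\<gamma>\<^sub>2 i j))"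
    and "sup (\<beta>s\<^sub>1 j) (\<beta>s\<^sub>2 j) \<le> sup (sup (\<beta>s\<^sub>1 i) (\<beta>s\<^sub>2 i)) (sup (\<gamma>\<^sub>1 i j) (\<gamma>\<^sub>2 i j))"
    and "sup (\<gamma>\<^sub>1 i k) (\<gamma>\<^sub>2 i k) \<le> sup (sup (\<gamma>\<^sub>1 i j) (\<gamma>\<^sub>2 i j)) (sup (\<gamma>\<^sub>1 j k) (\<gamma>\<^sub>2 j k))"
    by (blast intro: sup_le_sup_sup_interchange)+
qed

lemma distributive_sl_split_family:
  assumes "distributive_sl TYPE('a::bounded_semilattice_sup_bot)"
    and "\<forall>i\<in>I. c \<le> sup (\<alpha> i) (\<beta> i :: 'a)"
  obtains \<alpha>' \<beta>' where "\<forall>i\<in>I. \<alpha>' i \<le> \<alpha> i \<and> \<beta>' i \<le> \<beta> i \<and> sup (\<alpha>' i) (\<beta>' i) = c"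
proof -
  have "\<forall>i\<in>I. \<exists>a'. \<exists>b'. a' \<le> \<alpha> i \<and> b' \<le> \<beta> i \<and> sup a' b' = c"
    using assms unfolding distributive_sl_def by metis
  then obtain \<alpha>' where "\<forall>i\<in>I. \<exists>b'. \<alpha>' i \<le> \<alpha> i \<and> b' \<le> \<beta> i \<and> sup (\<alpha>' i) b' = c"
    by (metis bchoice)
  then obtain \<beta>' where "\<forall>i\<in>I. \<alpha>' i \<le> \<alpha> i \<and> \<beta>' i \<le> \<beta> i \<and> sup (\<alpha>' i) (\<beta>' i) = c"
    by (metis bchoice)
  then show ?thesis by (rule that)
qed

lemma URP1_at_solvable_below:
  assumes "URP1_at TYPE('i) eps"
    and "\<forall>i\<in>(I :: 'i set). \<alpha>' i \<le> \<alpha> i \<and> \<beta>' i \<le> \<beta> i \<and> sup (\<alpha>' i) (\<beta>' i) = eps"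
  obtains \<alpha>s \<beta>s \<gamma> where "URP1_solution I \<alpha> \<beta> eps \<alpha>s \<beta>s \<gamma>"
proof -
  obtain \<alpha>s \<beta>s \<gamma> where "URP1_solution I \<alpha>' \<beta>' eps \<alpha>s \<beta>s \<gamma>"
    using assms unfolding URP1_at_iff_solvable by blast
  with assms(2) show ?thesis
    by (blast intro: that URP1_solution_mono)
qed

theorem proposition1p4:
  assumes "distributive_sl TYPE('a::bounded_semilattice_sup_bot)"
  shows "\<forall>a\<in>{eps :: 'a. URP1_at TYPE('i) eps}. \<forall>b\<in>{eps :: 'a. URP1_at TYPE('i) eps}.
           sup a b \<in> {eps :: 'a. URP1_at TYPE('i) eps}"
proof (intro ballI, unfold mem_Collect_eq)
  fix a b :: 'a
  assume URP_a: "URP1_at TYPE('i) a" and URP_b: "URP1_at TYPE('i) b"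
  show "URP1_at TYPE('i) (sup a b)"
    unfolding URP1_at_iff_solvable
  proof (intro allI impI)
    fix I :: "'i set" and \<alpha> \<beta> :: "'i \<Rightarrow> 'a"
    assume join: "\<forall>i\<in>I. sup (\<alpha> i) (\<beta> i) = sup a b"
    obtain \<alpha>\<^sub>1 \<beta>\<^sub>1 where "\<forall>i\<in>I. \<alpha>\<^sub>1 i \<le> \<alpha> i \<and> \<beta>\<^sub>1 i \<le> \<beta> i \<and> sup (\<alpha>\<^sub>1 i) (\<beta>\<^sub>1 i) = a"
      using distributive_sl_split_family[OF assms] join by (metis sup_ge1)
    with URP_a obtain \<alpha>s\<^sub>1 \<beta>s\<^sub>1 \<gamma>\<^sub>1 where sol_a: "URP1_solution I \<alpha> \<beta> a \<alpha>s\<^sub>1 \<beta>s\<^sub>1 \<gamma>\<^sub>1"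
      by (rule URP1_at_solvable_below)
    obtain \<alpha>\<^sub>2 \<beta>\<^sub>2 where "\<forall>i\<in>I. \<alpha>\<^sub>2 i \<le> \<alpha> i \<and> \<beta>\<^sub>2 i \<le> \<beta> i \<and> sup (\<alpha>\<^sub>2 i) (\<beta>\<^sub>2 i) = b"
      using distributive_sl_split_family[OF assms] join by (metis sup_ge2)
    with URP_b obtain \<alpha>s\<^sub>2 \<beta>s\<^sub>2 \<gamma>\<^sub>2 where sol_b: "URP1_solution I \<alpha> \<beta> b \<alpha>s\<^sub>2 \<beta>s\<^sub>2 \<gamma>\<^sub>2"
      by (rule URP1_at_solvable_below)
    have "URP1_solution I \<alpha> \<beta> (sup a b) (\<lambda>i. sup (\<alpha>s\<^sub>1 i) (\<alpha>s\<^sub>2 i)) (\<lambda>i. sup (\<beta>s\<^sub>1 i) (\<beta>s\<^sub>2 i))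
        (\<lambda>i j. sup (\<gamma>\<^sub>1 i j) (\<gamma>\<^sub>2 i j))"
      using URP1_solution_sup[OF sol_a sol_b] by (rule URP1_solution_mono) simp
    then show "\<exists>\<alpha>s \<beta>s \<gamma>. URP1_solution I \<alpha> \<beta> (sup a b) \<alpha>s \<beta>s \<gamma>"
      by blast
  qed
qed

end
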